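(* Let $\mathcal{D}\subset\mathbb{R}^d$ be a bounded domain, and let $\mathrm{Re}>0$, $\mathrm{We}>0$, $\varepsilon\in(0,1)$. Let $(\mathbf{u},p,\boldsymbol{\tau})$ be a regular (smooth) solution on $[0,\infty)\times\mathcal{D}$ of the Oldroyd-B system $$\mathrm{Re}\left(\frac{\partial \mathbf{u}}{\partial t}+\mathbf{u}\cdot\nabla\mathbf{u}\right)=(1-\varepsilon)\Delta\mathbf{u}-\nabla p+\operatorname{div}\boldsymbol{\tau},\qquad \operatorname{div}\mathbf{u}=0,$$ $$\frac{\partial \boldsymbol{\tau}}{\partial t}+\mathbf{u}\cdot\nabla\boldsymbol{\tau}=\nabla\mathbf{u}\,\boldsymbol{\tau}+\boldsymbol{\tau}(\nabla\mathbf{u})^T-\frac{1}{\mathrm{We}}\boldsymbol{\tau}+\frac{\varepsilon}{\mathrm{We}}\left(\nabla\mathbf{u}+(\nabla\mathbf{u})^T\right),$$ with $\mathbf{u}=0$ on $\partial\mathcal{D}$, and let $\mathbf{A}=\frac{\mathrm{We}}{\varepsilon}\boldsymbol{\tau}+\mathbf{I}$ be the conformation tensor, so that $$\frac{\partial \mathbf{A}}{\partial t}+\mathbf{u}\cdot\nabla\mathbf{A}=\nabla\mathbf{u}\,\mathbf{A}+\mathbf{A}(\nabla\mathbf{u})^T-\frac{1}{\mathrm{We}}\mathbf{A}+\frac{1}{\mathrm{We}}\mathbf{I}.$$ Assume $\mathbf{A}(t=0)$ is a symmetric positive definite matrix at every point of $\mathcal{D}$ and that $\det\mathbf{A}(t=0)>1$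 on $\mathcal{D}$. Then for all $t\ge 0$, $\det\mathbf{A}(t)>1$ on $\mathcal{D}$, and consequently $\operatorname{tr}\boldsymbol{\tau}(t)>0$ on $\mathcal{D}$.
   Context: $\nabla\mathbf{u}$ denotes the velocity gradient matrix, $\mathbf{I}$ the $d\times d$ identity matrix. It is assumed that the solution is regular enough that $\mathbf{A}(t)$ stays symmetric positive definite for all $t\ge0$ (this property is propagated by the equation for $\mathbf{A}$). *)

theory Defs
  imports "HOL-Analysis.Analysis"
begin

text \<open>Fields are functions of the space-time point z = (t, x), t real, x in R^d,
  where R^d is modelled as real^'n (d = CARD('n)).
  Matrices are real^'n^'n; M $ i $ j is the (i,j) entry.\<close>

type_synonym 'n stp = "real \<times> (real^'n)"

definition C1_on ::
  "('a::real_normed_vector \<Rightarrow> 'b::real_normed_vector) \<Rightarrow> ('a \<Rightarrow> 'a \<Rightarrow>\<^sub>L 'b) \<Rightarrow> 'a set \<Rightarrow> bool" where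
  "C1_on f f' S \<longleftrightarrow>
     (\<forall>z\<in>S. (f has_derivative blinfun_apply (f' z)) (at z within S)) \<and> continuous_on S f'"

definition C2_on ::
  "('a::real_normed_vector \<Rightarrow> 'b::real_normed_vector) \<Rightarrow> ('a \<Rightarrow> 'a \<Rightarrow>\<^sub>L 'b)
     \<Rightarrow> ('a \<Rightarrow> 'a \<Rightarrow>\<^sub>L ('a \<Rightarrow>\<^sub>L 'b)) \<Rightarrow> 'a set \<Rightarrow> bool" where
  "C2_on f f' f'' S \<longleftrightarrow> C1_on f f' S \<and> C1_on f' f'' S"

definition tdir :: "('n::finite) stp" where "tdir = (1, 0)"
definition xdir :: "('n::finite) \<Rightarrow> 'n stp" where "xdir j = (0, axis j 1)"

definition grad_vel :: "('n stp \<Rightarrow>\<^sub>L (real^'n)) \<Rightarrow> real^'n^'n" where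
  "grad_vel L = (\<chi> i j. (blinfun_apply L (xdir j)) $ i)"

definition lap_vel :: "('n stp \<Rightarrow>\<^sub>L ('n stp \<Rightarrow>\<^sub>L (real^'n))) \<Rightarrow> real^'n" where
  "lap_vel L2 = (\<Sum>j\<in>UNIV. blinfun_apply (blinfun_apply L2 (xdir j)) (xdir j))"

definition grad_scal :: "('n stp \<Rightarrow>\<^sub>L real) \<Rightarrow> real^'n" where
  "grad_scal L = (\<chi> j. blinfun_apply L (xdir j))"

definition div_mat :: "('n stp \<Rightarrow>\<^sub>L (real^'n^'n)) \<Rightarrow> real^'n" where
  "div_mat L = (\<chi> i. \<Sum>j\<in>UNIV. (blinfun_apply L (xdir j)) $ i $ j)"

definition conv :: "real^'n \<Rightarrow> ('n stp \<Rightarrow>\<^sub>L 'b::real_normed_vector) \<Rightarrow> 'b" where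
  "conv v L = (\<Sum>j\<in>UNIV. (v $ j) *\<^sub>R blinfun_apply L (xdir j))"

definition spd :: "real^'n^'n \<Rightarrow> bool" where
  "spd M \<longleftrightarrow> transpose M = M \<and> (\<forall>v. v \<noteq> 0 \<longrightarrow> v \<bullet> (M *v v) > 0)"

definition bounded_domain :: "(real^'n) set \<Rightarrow> bool" where
  "bounded_domain D \<longleftrightarrow> D \<noteq> {} \<and> open D \<and> connected D \<and> bounded D"

definition conformation :: "real \<Rightarrow> real \<Rightarrow> real^'n^'n \<Rightarrow> real^'n^'n" where
  "conformation We \<epsilon> \<tau> = (We / \<epsilon>) *\<^sub>R \<tau> + mat 1"

end

theory Submission
  imports Defs
begin

text \<open>
  By Jacobi's formula, the material derivative of \<open>det A\<close> is \<open>det A tr (A\<^sup>-\<^sup>1 DA/Dt)\<close>.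
  Inserting the evolution law of \<open>A\<close>, the stretching terms drop out because \<open>tr \<nabla>u = 0\<close>, and
  what remains is \<open>(det A tr A\<^sup>-\<^sup>1 - d det A) / We\<close>. The AM-GM inequality for the eigenvalues
  of the positive definite matrix \<open>A\<^sup>-\<^sup>1\<close> gives \<open>det A tr A\<^sup>-\<^sup>1 \<ge> d min 1 (det A)\<close>, so
  \<open>D(det A)/Dt \<ge> -(d/We) max 0 (det A - 1)\<close>: along particle paths \<open>det A\<close> cannot fall to 1
  from above. Particle paths are replaced by backward Euler polygons, which keep a positive
  distance from the boundary because \<open>u\<close> is Lipschitz and vanishes there; along them a
  discrete Gronwall estimate turns the differential inequality into the claim. Finally AM-GM
  for \<open>A\<close> itself gives \<open>tr A > d\<close>, i.e. \<open>tr \<tau> > 0\<close>.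
\<close>

lemma matrix_add_rdistrib: "((A::'a::semiring_1^'n^'m) + B) ** C = A ** C + B ** C"
  by (simp add: matrix_matrix_mult_def vec_eq_iff distrib_right sum.distrib)

lemma trace_transpose: "trace (transpose A) = trace (A::'a::semiring_1^'n::finite^'n)"
  by (simp add: trace_def transpose_def)

lemma trace_scaleR: "trace (c *\<^sub>R A) = c * trace (A::real^'n::finite^'n)"
  by (simp add: trace_def sum_distrib_left)

section \<open>Jacobi's formula\<close>

definition det_differential :: "real^'n::finite^'n \<Rightarrow> real^'n^'n \<Rightarrow> real" where
  "det_differential X H = (\<Sum>p\<in>{p. p permutes UNIV}. of_int (sign p) *
      (\<Sum>i\<in>UNIV. H$i$p i * (\<Prod>j\<in>UNIV - {i}. X$j$p j)))"

lemma has_derivative_det: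
  fixes X :: "real^'n::finite^'n"
  shows "(det has_derivative det_differential X) (at X within S)"
proof -
  have entry: "bounded_linear (\<lambda>Y::real^'n^'n. Y$i$j)" for i j
    by (intro bounded_linear_compose[OF bounded_linear_vec_nth bounded_linear_vec_nth])
  have "((\<lambda>Y. \<Sum>p\<in>{p. p permutes UNIV}. of_int (sign p) * (\<Prod>i\<in>UNIV. Y$i$p i))
         has_derivative det_differential X) (at X within S)"
    unfolding det_differential_def
    by (intro has_derivative_sum has_derivative_mult_right has_derivative_prod
        bounded_linear_imp_has_derivative entry)
  then show ?thesis by (simp add: det_def[abs_def])
qed

lemma linear_det_differential: "linear (det_differential X)"
  using has_derivative_det[of X UNIV] has_derivative_linear by blast

lemma continuous_on_det_differential:
  fixes X H :: "'a::topological_space \<Rightarrow> real^'n::finite^'n"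
  assumes "continuous_on T X" "continuous_on T H"
  shows "continuous_on T (\<lambda>z. det_differential (X z) (H z))"
  unfolding det_differential_def
  by (intro continuous_intros continuous_on_component assms)

lemma det_differential_mat_1: "det_differential (mat 1 :: real^'n::finite^'n) H = trace H"
proof -
  have diag_prod: "(\<Prod>j\<in>UNIV - {i}. (mat 1 :: real^'n^'n)$j$p j) = (if p = id then 1 else 0)"
    if p: "p permutes UNIV" for p i
  proof (cases "p = id")
    case False
    have "\<exists>j. j \<noteq> i \<and> p j \<noteq> j"
    proof (rule ccontr)
      assume "\<not> ?thesis"
      then have "p j = j" if "j \<noteq> i" for j using that by blast
      moreover then have "p i = i" using p by (metis permutes_def)
      ultimately show False using False by (metis eq_id_iff)
    qed
    then show ?thesis using False by (auto simp: mat_def intro!: prod_zero)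
  qed (simp add: mat_def)
  have "det_differential (mat 1 :: real^'n^'n) H
      = (\<Sum>p\<in>{p. p permutes (UNIV::'n set)}. if p = id then trace H else 0)"
    unfolding det_differential_def
  proof (rule sum.cong[OF refl])
    fix p assume "p \<in> {p. p permutes (UNIV::'n set)}"
    then show "of_int (sign p) * (\<Sum>i\<in>UNIV. H$i$p i * (\<Prod>j\<in>UNIV - {i}. (mat 1 :: real^'n^'n)$j$p j))
        = (if p = id then trace H else 0)"
      by (cases "p = id") (simp add: sign_id trace_def mat_def, simp add: diag_prod)
  qed
  also have "\<dots> = trace H" by (simp add: sum.delta' permutes_id)
  finally show ?thesis .
qed

lemma det_differential_eqI:
  fixes X H L :: "real^'n::finite^'n"
  assumes "\<And>s. det (X + s *\<^sub>R H) = c * det (mat 1 + s *\<^sub>R L)"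
  shows "det_differential X H = c * trace L"
proof -
  have line: "((\<lambda>s::real. det (Y + s *\<^sub>R M)) has_derivative (\<lambda>s. det_differential Y (s *\<^sub>R M))) (at 0)"
    for Y M :: "real^'n^'n"
  proof -
    have "((\<lambda>s::real. Y + s *\<^sub>R M) has_derivative (\<lambda>s. s *\<^sub>R M)) (at 0)"
      by (auto intro!: derivative_eq_intros)
    from has_derivative_compose[OF this has_derivative_det] show ?thesis by simp
  qed
  have "(\<lambda>s. det_differential X (s *\<^sub>R H)) = (\<lambda>s. c * det_differential (mat 1) (s *\<^sub>R L))"
    by (rule has_derivative_unique[OF line[of X H]])
       (use has_derivative_mult_right[OF line[of "mat 1" L], of c] in \<open>simp add: assms\<close>)
  from fun_cong[OF this, of 1] show ?thesis by (simp add: det_differential_mat_1)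
qed

lemma det_differential_mult_right: "det_differential X (X ** L) = det X * trace L"
  by (rule det_differential_eqI)
     (simp add: det_mul[symmetric] matrix_add_ldistrib matrix_scalar_ac scalar_matrix_assoc[symmetric])

lemma det_differential_mult_left: "det_differential X (L ** X) = det X * trace L"
proof (rule det_differential_eqI)
  fix s :: real
  have "X + s *\<^sub>R (L ** X) = (mat 1 + s *\<^sub>R L) ** X"
    by (simp add: matrix_add_rdistrib scalar_matrix_assoc)
  then show "det (X + s *\<^sub>R (L ** X)) = det X * det (mat 1 + s *\<^sub>R L)"
    by (simp add: det_mul)
qed

section \<open>Symmetric and positive definite matrices\<close>

lemma inner_symmetric_matrix_vector:
  fixes B :: "real^'n::finite^'n"
  assumes "transpose B = B"
  shows "x \<bullet> (B *v y) = (B *v x) \<bullet> y"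
  by (metis assms dot_lmul_matrix transpose_matrix_vector)

lemma nonpos_if_linear_le_quadratic:
  fixes c K :: real
  assumes "\<And>t. 2 * t * c \<le> t\<^sup>2 * K"
  shows "c \<le> 0"
proof (rule field_le_epsilon)
  fix e :: real assume e: "0 < e"
  define t where "t = e / (2 * (\<bar>K\<bar> + 1))"
  have t: "0 < t" using e by (simp add: t_def)
  have "t\<^sup>2 * K \<le> t\<^sup>2 * \<bar>K\<bar>" by (intro mult_left_mono) auto
  then have "2 * t * c \<le> t * (t * \<bar>K\<bar>)" using assms[of t] by (simp add: power2_eq_square)
  then have "c \<le> t * \<bar>K\<bar> / 2" using t by (simp add: field_simps)
  also have "\<dots> \<le> e" using e by (simp add: t_def field_simps)
  finally show "c \<le> 0 + e" by simp
qed

text \<open>Perturbing a maximiser \<open>v\<close> in the direction \<open>w = B v - q v\<close> gives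
  \<open>2 t |w|\<^sup>2 \<le> t\<^sup>2 K\<close> for all \<open>t\<close>, which forces \<open>w = 0\<close>.\<close>
lemma rayleigh_max_imp_eigenvector:
  fixes B :: "real^'n::finite^'n"
  assumes sym: "transpose B = B" and V: "subspace V" and inv: "\<And>x. x \<in> V \<Longrightarrow> B *v x \<in> V"
    and v: "v \<in> V" "norm v = 1"
    and max: "\<And>y. y \<in> V \<Longrightarrow> norm y = 1 \<Longrightarrow> y \<bullet> (B *v y) \<le> v \<bullet> (B *v v)"
  shows "B *v v = (v \<bullet> (B *v v)) *\<^sub>R v"
proof -
  define q where "q = v \<bullet> (B *v v)"
  define w where "w = B *v v - q *\<^sub>R v"
  have vv: "v \<bullet> v = 1" using v(2) by (simp add: dot_square_norm)
  have quad: "z \<bullet> (B *v z) \<le> q * (z \<bullet> z)" if "z \<in> V" for z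
  proof (cases "z = 0")
    case False
    have "(z /\<^sub>R norm z) \<bullet> (B *v (z /\<^sub>R norm z)) \<le> q"
      using max[of "z /\<^sub>R norm z"] that False V by (simp add: q_def subspace_scale)
    then show ?thesis
      using False by (simp add: matrix_vector_mult_scaleR dot_square_norm field_simps power2_eq_square)
  qed simp
  have wV: "w \<in> V" unfolding w_def using V v inv by (intro subspace_diff subspace_scale) auto
  have wv: "w \<bullet> v = 0" using vv by (simp add: w_def q_def inner_diff_left inner_commute inner_diff_right)
  have vBw: "v \<bullet> (B *v w) = w \<bullet> w"
    using wv by (simp add: inner_symmetric_matrix_vector[OF sym] w_def inner_diff_left inner_commute)
  define K where "K = q * (w \<bullet> w) - w \<bullet> (B *v w)"
  have perturb: "2 * t * (w \<bullet> w) \<le> t\<^sup>2 * K" for t :: real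
  proof -
    have "v + t *\<^sub>R w \<in> V" using V v wV by (intro subspace_add subspace_scale) auto
    from quad[OF this] show ?thesis
      using vv wv vBw inner_symmetric_matrix_vector[OF sym, of w v]
      by (simp add: K_def q_def matrix_vector_right_distrib matrix_vector_mult_scaleR inner_add_left
          inner_add_right inner_commute power2_eq_square algebra_simps)
  qed
  have "w \<bullet> w \<le> 0" by (rule nonpos_if_linear_le_quadratic[OF perturb])
  then have "w = 0" by (metis inner_eq_zero_iff inner_ge_zero order_antisym)
  then show ?thesis by (simp add: w_def q_def)
qed

lemma symmetric_eigenvector_orthogonal_to:
  fixes B :: "real^'n::finite^'n"
  assumes sym: "transpose B = B" and "finite S" and "card S < CARD('n)"
    and eig: "\<And>s. s \<in> S \<Longrightarrow> \<exists>l. B *v s = l *\<^sub>R s"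
  obtains v where "norm v = 1" "\<forall>s\<in>S. v \<bullet> s = 0" "\<exists>l. B *v v = l *\<^sub>R v"
proof -
  define V where "V = {v::real^'n. \<forall>s\<in>S. v \<bullet> s = 0}"
  define T where "T = sphere 0 1 \<inter> V"
  have V: "subspace V" by (auto simp: V_def subspace_def inner_add_left)
  have inv: "B *v x \<in> V" if "x \<in> V" for x
  proof -
    have "(B *v x) \<bullet> s = 0" if "s \<in> S" for s
      using eig[OF that] \<open>x \<in> V\<close> \<open>s \<in> S\<close>
      by (auto simp: V_def inner_symmetric_matrix_vector[OF sym, symmetric])
    then show ?thesis by (simp add: V_def)
  qed
  have "dim S < DIM(real^'n)" using dim_le_card'[OF \<open>finite S\<close>] assms(3) by simp
  then obtain x :: "real^'n" where x: "x \<noteq> 0" "\<And>y. y \<in> span S \<Longrightarrow> orthogonal x y"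
    using orthogonal_to_subspace_exists by metis
  then have "x /\<^sub>R norm x \<in> T" by (auto simp: T_def V_def orthogonal_def span_base)
  moreover have "compact T"
    unfolding T_def V_def by (intro compact_Int_closed compact_sphere closed_subspace V[unfolded V_def])
  moreover have "continuous_on T (\<lambda>v. v \<bullet> (B *v v))"
    by (intro continuous_intros matrix_vector_mult_linear_continuous_on)
  ultimately obtain v where "v \<in> T" and "\<And>y. y \<in> T \<Longrightarrow> y \<bullet> (B *v y) \<le> v \<bullet> (B *v v)"
    using continuous_attains_sup[of T "\<lambda>v. v \<bullet> (B *v v)"] by blast
  then have "B *v v = (v \<bullet> (B *v v)) *\<^sub>R v"
    by (intro rayleigh_max_imp_eigenvector[OF sym V inv]) (auto simp: T_def)
  then show ?thesis using that \<open>v \<in> T\<close> by (auto simp: T_def V_def)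
qed

lemma symmetric_orthonormal_eigenbasis:
  fixes B :: "real^'n::finite^'n"
  assumes sym: "transpose B = B"
  obtains f :: "'n \<Rightarrow> real^'n"
  where "\<And>i j. f i \<bullet> f j = (if i = j then 1 else 0)" "\<And>j. \<exists>l. B *v f j = l *\<^sub>R f j"
proof -
  define onb where "onb S \<longleftrightarrow> finite S \<and> (\<forall>s\<in>S. norm s = 1 \<and> (\<exists>l. B *v s = l *\<^sub>R s))
      \<and> (\<forall>s\<in>S. \<forall>s'\<in>S. s \<noteq> s' \<longrightarrow> s \<bullet> s' = 0)" for S :: "(real^'n) set"
  have "\<exists>S. onb S \<and> card S = k" if "k \<le> CARD('n)" for k
    using that
  proof (induction k)
    case 0
    show ?case by (intro exI[of _ "{}"]) (simp add: onb_def)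
  next
    case (Suc k)
    then obtain S where S: "onb S" "card S = k" by auto
    then obtain v where v: "norm v = 1" "\<forall>s\<in>S. v \<bullet> s = 0" "\<exists>l. B *v v = l *\<^sub>R v"
      using symmetric_eigenvector_orthogonal_to[OF sym, of S] Suc.prems by (auto simp: onb_def)
    then have "v \<notin> S" by auto
    moreover have "\<forall>s\<in>S. s \<bullet> v = 0" using v(2) by (simp add: inner_commute)
    ultimately have "onb (insert v S) \<and> card (insert v S) = Suc k"
      using S v unfolding onb_def by auto
    then show ?case by blast
  qed
  then obtain S where S: "onb S" "card S = CARD('n)" by blast
  moreover have "finite S" using S(1) by (simp add: onb_def)
  ultimately obtain f where f: "bij_betw f (UNIV::'n set) S"
    using finite_same_card_bij[of "UNIV::'n set" S] by auto
  have fS: "f i \<in> S" and finj: "f i = f j \<longleftrightarrow> i = j" for i j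
    using bij_betwE[OF f] inj_eq[OF bij_betw_imp_inj_on[OF f]] by auto
  show ?thesis
  proof (rule that)
    show "f i \<bullet> f j = (if i = j then 1 else 0)" for i j
      using S(1) fS[of i] fS[of j] finj[of i j] by (cases "i = j") (auto simp: onb_def dot_square_norm)
    show "\<exists>l. B *v f j = l *\<^sub>R f j" for j
      using S(1) fS[of j] by (auto simp: onb_def)
  qed
qed

lemma transpose_mult_mult_column:
  fixes Q M :: "real^'n::finite^'n"
  shows "(transpose Q ** M ** Q) $ i $ j = column i Q \<bullet> (M *v column j Q)"
proof -
  have "(transpose Q ** M ** Q) $ i $ j = (\<Sum>l\<in>UNIV. \<Sum>k\<in>UNIV. Q $ k $ i * M $ k $ l * Q $ l $ j)"
    by (simp add: matrix_matrix_mult_def transpose_def sum_distrib_right)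
  also have "\<dots> = column i Q \<bullet> (M *v column j Q)"
    by (subst sum.swap)
       (simp add: column_def matrix_vector_mult_def inner_vec_def sum_distrib_left mult.assoc)
  finally show ?thesis .
qed

lemma symmetric_det_trace_eigenvalues:
  fixes B :: "real^'n::finite^'n"
  assumes sym: "transpose B = B"
  obtains lam :: "'n \<Rightarrow> real"
  where "det B = (\<Prod>j\<in>UNIV. lam j)" "trace B = (\<Sum>j\<in>UNIV. lam j)"
    "\<And>j. \<exists>v. v \<noteq> 0 \<and> B *v v = lam j *\<^sub>R v"
proof -
  obtain f :: "'n \<Rightarrow> real^'n" where orth: "\<And>i j. f i \<bullet> f j = (if i = j then 1 else 0)"
    and eig: "\<And>j. \<exists>l. B *v f j = l *\<^sub>R f j"
    using symmetric_orthonormal_eigenbasis[OF sym] by blast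
  define Q :: "real^'n^'n" where "Q = (\<chi> i j. f j $ i)"
  have conj: "(transpose Q ** M ** Q) $ i $ j = f i \<bullet> (M *v f j)" for M i j
    using transpose_mult_mult_column[of Q M i j] by (simp add: Q_def column_def)
  have "(transpose Q ** Q) $ i $ j = (if i = j then 1 else 0)" for i j
    using conj[of "mat 1" i j] orth[of i j] by simp
  then have QQ: "transpose Q ** Q = mat 1" by (simp add: vec_eq_iff mat_def)
  define \<Lambda> where "\<Lambda> = transpose Q ** B ** Q"
  define lam where "lam j = \<Lambda> $ j $ j" for j
  have eig_lam: "B *v f j = lam j *\<^sub>R f j" for j
    using eig[of j] orth[of j j] by (auto simp: lam_def \<Lambda>_def conj)
  have "det \<Lambda> = det B * (det Q * det Q)"
    by (simp add: \<Lambda>_def det_mul)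
  also have "det Q * det Q = 1"
    using QQ by (metis det_I det_mul det_transpose)
  finally have "det B = det \<Lambda>" by simp
  also have "\<dots> = (\<Prod>j\<in>UNIV. lam j)"
    by (rule det_diagonal[of \<Lambda>, unfolded lam_def[symmetric]])
       (simp add: \<Lambda>_def conj eig_lam orth)
  finally have "det B = (\<Prod>j\<in>UNIV. lam j)" .
  moreover have "trace B = (\<Sum>j\<in>UNIV. lam j)"
  proof -
    have "trace \<Lambda> = trace ((Q ** transpose Q) ** B)"
      unfolding \<Lambda>_def by (metis matrix_mul_assoc trace_mul_sym)
    moreover have "Q ** transpose Q = mat 1" by (rule matrix_left_right_inverse1[OF QQ])
    ultimately show ?thesis by (simp add: trace_def lam_def)
  qed
  moreover have "\<exists>v. v \<noteq> 0 \<and> B *v v = lam j *\<^sub>R v" for j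
    using eig_lam orth[of j j] by (intro exI[of _ "f j"]) auto
  ultimately show ?thesis by (rule that)
qed

lemma spd_eigenvalues:
  fixes B :: "real^'n::finite^'n"
  assumes "spd B"
  obtains lam :: "'n \<Rightarrow> real"
  where "\<And>j. lam j > 0" "det B = (\<Prod>j\<in>UNIV. lam j)" "trace B = (\<Sum>j\<in>UNIV. lam j)"
proof -
  have sym: "transpose B = B" and pos: "\<And>v. v \<noteq> 0 \<Longrightarrow> v \<bullet> (B *v v) > 0"
    using assms by (auto simp: spd_def)
  obtain lam :: "'n \<Rightarrow> real" where lam: "det B = (\<Prod>j\<in>UNIV. lam j)" "trace B = (\<Sum>j\<in>UNIV. lam j)"
    and eig: "\<And>j. \<exists>v. v \<noteq> 0 \<and> B *v v = lam j *\<^sub>R v"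
    using symmetric_det_trace_eigenvalues[OF sym] by blast
  have "lam j > 0" for j
  proof -
    obtain v where v: "v \<noteq> 0" "B *v v = lam j *\<^sub>R v" using eig by blast
    then have "0 < lam j * (v \<bullet> v)" using pos[of v] by simp
    then show ?thesis using inner_ge_zero[of v] by (simp add: zero_less_mult_iff)
  qed
  then show ?thesis using that lam by blast
qed

lemma spd_det_pos: "spd B \<Longrightarrow> det B > 0"
  by (metis prod_pos spd_eigenvalues)

lemma spd_trace_ge_det_root:
  fixes B :: "real^'n::finite^'n"
  assumes "spd B"
  shows "real CARD('n) * det B powr (1 / real CARD('n)) \<le> trace B"
proof -
  obtain lam :: "'n \<Rightarrow> real"
    where pos: "\<And>j. lam j > 0" and "det B = (\<Prod>j\<in>UNIV. lam j)" "trace B = (\<Sum>j\<in>UNIV. lam j)"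
    using spd_eigenvalues[OF assms] by blast
  moreover have "(\<Prod>j\<in>UNIV. lam j) powr (1 / card (UNIV::'n set)) \<le> (\<Sum>j\<in>UNIV. lam j / card (UNIV::'n set))"
    using pos by (intro arith_geom_mean) (auto intro: less_imp_le)
  ultimately show ?thesis by (simp add: sum_divide_distrib[symmetric] field_simps)
qed

lemma spd_right_inverse:
  fixes A :: "real^'n::finite^'n"
  assumes A: "spd A" and inv: "A ** A' = mat 1"
  shows "spd A'"
proof -
  have symA: "transpose A = A" and pos: "\<And>v. v \<noteq> 0 \<Longrightarrow> v \<bullet> (A *v v) > 0"
    using A by (auto simp: spd_def)
  have "transpose A' = transpose A' ** (A ** A')" using inv by simp
  also have "\<dots> = transpose (A ** A') ** A'"
    by (simp add: matrix_mul_assoc matrix_transpose_mul symA)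
  finally have "transpose A' = A'" using inv by simp
  moreover have "v \<bullet> (A' *v v) > 0" if "v \<noteq> 0" for v
  proof -
    have v: "v = A *v (A' *v v)" by (simp add: matrix_vector_mul_assoc inv)
    then have "A' *v v \<noteq> 0" using that by auto
    from pos[OF this] show ?thesis by (subst (asm) v[symmetric]) (simp add: inner_commute)
  qed
  ultimately show ?thesis by (simp add: spd_def)
qed

lemma spd_det_mult_trace_inverse_ge:
  fixes A :: "real^'n::finite^'n"
  assumes A: "spd A" and inv: "A ** A' = mat 1"
  shows "real CARD('n) * min 1 (det A) \<le> det A * trace A'"
proof -
  define d where "d = real CARD('n)"
  define P where "P = det A"
  have d: "d \<ge> 1" and P: "P > 0" using spd_det_pos[OF A] by (simp_all add: d_def P_def)
  have "det A' = 1 / P" using arg_cong[OF inv, of det] P by (simp add: det_mul P_def field_simps)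
  then have tr: "d * (1 / P) powr (1 / d) \<le> trace A'"
    using spd_trace_ge_det_root[OF spd_right_inverse[OF A inv]] by (simp add: d_def)
  have "min 1 P \<le> P * (1 / P) powr (1 / d)"
  proof (cases "P \<le> 1")
    case True
    then have "1 \<le> (1 / P) powr (1 / d)" using P d by (intro ge_one_powr_ge_zero) auto
    then show ?thesis using True P by (simp add: min_def)
  next
    case False
    have "P powr (1 / d) \<le> P powr 1" using False d by (intro powr_mono) auto
    then show ?thesis using False P by (simp add: min_def powr_divide field_simps)
  qed
  then have "d * min 1 P \<le> P * (d * (1 / P) powr (1 / d))"
    using d by (simp add: mult_left_mono mult.left_commute)
  also have "\<dots> \<le> P * trace A'" using tr P by (intro mult_left_mono) auto
  finally show ?thesis by (simp add: d_def P_def)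
qed

lemma spd_trace_gt_card:
  fixes A :: "real^'n::finite^'n"
  assumes "spd A" "1 < det A"
  shows "real CARD('n) < trace A"
proof -
  have "1 < det A powr (1 / real CARD('n))" using assms(2) by simp
  then have "real CARD('n) * 1 < real CARD('n) * det A powr (1 / real CARD('n))" by simp
  then show ?thesis using spd_trace_ge_det_root[OF assms(1)] by linarith
qed

lemma trace_conformation:
  "trace (conformation We \<epsilon> \<tau>) = We / \<epsilon> * trace \<tau> + real CARD('n)" for \<tau> :: "real^'n::finite^'n"
  by (simp add: conformation_def trace_add trace_scaleR trace_I)

text \<open>The stretching terms contribute \<open>2 det A tr G = 0\<close>, the relaxation terms
  \<open>(det A tr A\<^sup>-\<^sup>1 - d det A) / We\<close>.\<close>
lemma det_differential_conformation_rate: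
  fixes A G :: "real^'n::finite^'n"
  assumes A: "spd A" and G: "trace G = 0" and We: "We > 0"
  shows "- (real CARD('n) / We) * max 0 (det A - 1)
    \<le> det_differential A (G ** A + A ** transpose G - (1 / We) *\<^sub>R A + (1 / We) *\<^sub>R mat 1)"
proof -
  obtain A' where inv: "A ** A' = mat 1"
    using spd_det_pos[OF A] by (metis invertible_def invertible_det_nz less_irrefl)
  define d where "d = real CARD('n)"
  interpret lin: linear "det_differential A" by (rule linear_det_differential)
  have "det_differential A (G ** A + A ** transpose G - (1 / We) *\<^sub>R A + (1 / We) *\<^sub>R mat 1)
      = (det A * trace A' - d * det A) / We"
    using det_differential_mult_left[of A G] det_differential_mult_right[of A "transpose G"]
      det_differential_mult_right[of A "mat 1"] det_differential_mult_right[of A A']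
    by (simp add: lin.add lin.diff lin.scale G inv trace_transpose trace_I d_def diff_divide_distrib)
  moreover have "(d * min 1 (det A) - d * det A) / We \<le> (det A * trace A' - d * det A) / We"
    using spd_det_mult_trace_inverse_ge[OF A inv] We by (intro divide_right_mono) (auto simp: d_def)
  moreover have "(d * min 1 (det A) - d * det A) / We = - (d / We) * max 0 (det A - 1)"
    by (simp add: min_def max_def diff_divide_distrib right_diff_distrib)
  ultimately show ?thesis by (simp add: d_def)
qed

lemma tdir_add_conv: "blinfun_apply L tdir + conv v L = blinfun_apply L (1, v)"
proof -
  have "(\<Sum>j\<in>UNIV. v $ j *\<^sub>R xdir j) = ((0::real), v)"
    using basis_expansion[of v] by (simp add: xdir_def prod_eq_iff fst_sum snd_sum scalar_mult_eq_scaleR)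
  then have "conv v L = blinfun_apply L (0, v)"
    by (simp add: conv_def blinfun.sum_right[symmetric] blinfun.scaleR_right[symmetric])
  then show ?thesis by (simp add: tdir_def blinfun.add_right[symmetric])
qed

lemma conformation_evolution:
  fixes G \<tau> :: "real^'n::finite^'n"
  assumes We: "We > 0" and eps: "\<epsilon> > 0"
  defines "A \<equiv> conformation We \<epsilon> \<tau>"
  shows "(We / \<epsilon>) *\<^sub>R (G ** \<tau> + \<tau> ** transpose G - (1 / We) *\<^sub>R \<tau> + (\<epsilon> / We) *\<^sub>R (G + transpose G))
    = G ** A + A ** transpose G - (1 / We) *\<^sub>R A + (1 / We) *\<^sub>R mat 1"
proof -
  have "(We / \<epsilon>) * (\<epsilon> / We) = 1" using We eps by simp
  then show ?thesis
    using We eps unfolding A_def conformation_def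
    by (simp add: matrix_add_ldistrib matrix_add_rdistrib matrix_scalar_ac scalar_matrix_assoc[symmetric]
        scaleR_add_right scaleR_diff_right algebra_simps)
qed

section \<open>Approximate characteristics\<close>

lemma norm_le_infdist_compl:
  fixes g :: "'a::euclidean_space \<Rightarrow> 'b::real_normed_vector"
  assumes D: "open D" "D \<noteq> UNIV"
    and deriv: "\<And>y. y \<in> closure D \<Longrightarrow> (g has_derivative g' y) (at y within closure D)"
    and bound: "\<And>y. y \<in> closure D \<Longrightarrow> onorm (g' y) \<le> L"
    and zero: "\<And>y. y \<in> frontier D \<Longrightarrow> g y = 0"
    and x: "x \<in> D"
  shows "norm (g x) \<le> L * infdist x (- D)"
proof -
  obtain y where y: "y \<notin> D" "infdist x (- D) = dist x y"
    using infdist_attains_inf[of "- D" x] D by (auto simp: closed_Compl)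
  have "ball x (dist x y) \<subseteq> D"
    using y infdist_le[of _ "- D" x] by (force simp: dist_commute)
  then have "cball x (dist x y) \<subseteq> closure D"
    using x y(1) closure_mono[of "ball x (dist x y)" D] by (metis closure_ball dist_pos_lt)
  then have seg: "closed_segment x y \<subseteq> closure D"
    by (meson closed_segment_subset convex_cball centre_in_cball dist_commute mem_cball
        order_trans zero_le_dist order_refl)
  then have "y \<in> frontier D" using y(1) D by (auto simp: frontier_def interior_open)
  then have "norm (g x - g y) \<le> L * norm (x - y)"
    using seg zero
    by (intro differentiable_bound[of "closed_segment x y" g g' L])
       (auto intro: has_derivative_subset[OF deriv] bound)
  then show ?thesis using zero \<open>y \<in> frontier D\<close> y(2) by (simp add: dist_norm)
qed

lemma exp_le_one_minus_power:
  fixes x :: real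
  assumes "0 \<le> x" "x \<le> 1/2"
  shows "exp (real n * (- 2 * x)) \<le> (1 - x) ^ n"
proof -
  have "- 2 * x \<le> - x - 2 * x\<^sup>2"
    using assms mult_left_mono[of "2 * x" 1 x] by (simp add: power2_eq_square)
  also have "\<dots> \<le> ln (1 - x)" by (rule ln_one_minus_pos_lower_bound[OF assms])
  finally have "exp (- 2 * x) \<le> exp (ln (1 - x))" by simp
  then have "exp (- 2 * x) ^ n \<le> (1 - x) ^ n" using assms by (intro power_mono) auto
  then show ?thesis by (simp only: exp_of_nat_mult)
qed

lemma discrete_gronwall:
  fixes e :: "nat \<Rightarrow> real"
  assumes "e 0 \<le> 0" "0 \<le> b" "0 \<le> c"
    and step: "\<And>k. k < N \<Longrightarrow> e (Suc k) \<le> (1 + b) * e k + c"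
  shows "e N \<le> real N * c * exp (real N * b)"
proof -
  have "e k \<le> real k * c * (1 + b) ^ k" if "k \<le> N" for k
    using that
  proof (induction k)
    case (Suc k)
    have "e (Suc k) \<le> (1 + b) * e k + c" using step Suc.prems by simp
    also have "\<dots> \<le> (1 + b) * (real k * c * (1 + b) ^ k) + c"
      using Suc assms(2) by (intro add_right_mono mult_left_mono) simp_all
    also have "\<dots> \<le> (1 + b) * (real k * c * (1 + b) ^ k) + c * (1 + b) ^ Suc k"
      using assms(2,3) mult_left_mono[OF one_le_power[of "1 + b" "Suc k"], of c] by simp
    finally show ?case by (simp add: algebra_simps)
  qed (use assms in simp)
  also have "real N * c * (1 + b) ^ N \<le> real N * c * exp b ^ N"
    using assms(2,3) by (intro mult_left_mono power_mono) auto
  finally show ?thesis by (simp add: exp_of_nat_mult)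
qed

lemma has_derivative_backward_segment_le:
  fixes F :: "'a::real_normed_vector \<Rightarrow> real"
  assumes deriv: "\<And>y. y \<in> S \<Longrightarrow> (F has_derivative F' y) (at y within S)"
    and h: "0 \<le> h"
    and seg: "\<And>s. s \<in> {0..1} \<Longrightarrow> z - (s * h) *\<^sub>R v \<in> S"
    and lower: "\<And>s. s \<in> {0..1} \<Longrightarrow> m \<le> F' (z - (s * h) *\<^sub>R v) v"
  shows "F (z - h *\<^sub>R v) \<le> F z - h * m"
proof -
  let ?y = "\<lambda>s. z - (s * h) *\<^sub>R v"
  have "((\<lambda>s. F (?y s)) has_derivative (\<lambda>r. F' (?y s) (- (r * h) *\<^sub>R v))) (at s within {0..1})"
    if "s \<in> {0..1}" for s
  proof (rule has_derivative_in_compose[of ?y])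
    show "(?y has_derivative (\<lambda>r. - (r * h) *\<^sub>R v)) (at s within {0..1})"
      by (auto intro!: derivative_eq_intros)
    show "(F has_derivative F' (?y s)) (at (?y s) within ?y ` {0..1})"
      using seg that by (intro has_derivative_subset[OF deriv]) auto
  qed
  then have "\<exists>s\<in>{0..1}. F (?y 1) - F (?y 0) = F' (?y s) (- ((1 - 0) * h) *\<^sub>R v)"
    by (intro mvt_very_simple) auto
  then obtain s where s: "s \<in> {0..1}" and mvt: "F (?y 1) - F (?y 0) = F' (?y s) ((- h) *\<^sub>R v)"
    by auto
  interpret linear "F' (?y s)" by (rule has_derivative_linear[OF deriv[OF seg[OF s]]])
  have "F (z - h *\<^sub>R v) - F z = F' (?y s) ((- h) *\<^sub>R v)" using mvt by simp
  also have "\<dots> = - h * F' (?y s) v" by (simp only: scale) simp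
  also have "\<dots> \<le> - h * m" using lower[OF s] h by (simp add: mult_left_mono)
  finally show ?thesis by simp
qed

lemma uniform_subdivision:
  fixes t0 b :: real
  assumes "0 < t0" "0 < b"
  obtains N h where "0 < h" "h < b" "real N * h = t0"
proof -
  obtain N :: nat where N: "t0 / b < real N" using reals_Archimedean2 by blast
  moreover have "0 < t0 / b" using assms by simp
  ultimately have "0 < real N" by linarith
  then show ?thesis using that[of "t0 / real N" N] assms N by (simp add: field_simps)
qed

lemma backward_time_mem:
  assumes "k < N" "real N * h = t0" "0 \<le> h" "s \<in> {0..1}"
  shows "t0 - real k * h - s * h \<in> {0..t0}"
proof -
  have "real (Suc k) * h \<le> real N * h" using assms by (intro mult_right_mono) auto
  moreover have "0 \<le> s * h" "s * h \<le> h" using assms by (auto intro: mult_left_le_one_le)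
  moreover have "0 \<le> real k * h" using assms by simp
  ultimately show ?thesis using assms by (simp add: algebra_simps)
qed

definition backward_euler :: "(real \<times> 'a \<Rightarrow> 'a::real_vector) \<Rightarrow> real \<Rightarrow> 'a \<Rightarrow> real \<Rightarrow> nat \<Rightarrow> 'a" where
  "backward_euler u t0 x0 h = rec_nat x0 (\<lambda>k y. y - h *\<^sub>R u (t0 - real k * h, y))"

lemma backward_euler_0 [simp]: "backward_euler u t0 x0 h 0 = x0"
  by (simp add: backward_euler_def)

lemma backward_euler_Suc [simp]:
  "backward_euler u t0 x0 h (Suc k) =
     backward_euler u t0 x0 h k - h *\<^sub>R u (t0 - real k * h, backward_euler u t0 x0 h k)"
  by (simp add: backward_euler_def)

definition backward_euler_within :: "(real \<times> 'a \<Rightarrow> 'a::real_vector) \<Rightarrow> real \<Rightarrow> 'a \<Rightarrow> real \<Rightarrow> 'a set \<Rightarrow> bool" where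
  "backward_euler_within u t0 x0 \<eta> K \<longleftrightarrow>
     (\<forall>h N k s. 0 < h \<longrightarrow> h \<le> \<eta> \<longrightarrow> real N * h \<le> t0 \<longrightarrow> k \<le> N \<longrightarrow> s \<in> {0..1} \<longrightarrow>
        backward_euler u t0 x0 h k - (s * h) *\<^sub>R u (t0 - real k * h, backward_euler u t0 x0 h k) \<in> K)"

lemma backward_euler_withinD:
  assumes "backward_euler_within u t0 x0 \<eta> K" "0 < h" "h \<le> \<eta>" "real N * h \<le> t0" "k \<le> N" "s \<in> {0..1}"
  shows "backward_euler u t0 x0 h k - (s * h) *\<^sub>R u (t0 - real k * h, backward_euler u t0 x0 h k) \<in> K"
  using assms unfolding backward_euler_within_def by blast

lemma infdist_step_ge:
  assumes "norm v \<le> L * infdist y A" "0 \<le> r"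
  shows "(1 - r * L) * infdist y A \<le> infdist (y - r *\<^sub>R v) A"
proof -
  have "infdist y A \<le> infdist (y - r *\<^sub>R v) A + r * norm v"
    using infdist_triangle[of y A "y - r *\<^sub>R v"] assms(2) by (simp add: dist_norm)
  moreover have "r * norm v \<le> r * (L * infdist y A)" using assms by (intro mult_left_mono)
  ultimately show ?thesis by (simp add: algebra_simps)
qed

lemma infdist_backward_euler_ge:
  fixes u :: "real \<times> 'a::real_normed_vector \<Rightarrow> 'a"
  assumes bound: "\<And>t y. t \<in> {0..t0} \<Longrightarrow> y \<in> D \<Longrightarrow> norm (u (t, y)) \<le> L * infdist y (- D)"
    and L: "0 \<le> L" and h: "0 \<le> h" "h * L \<le> 1" and N: "real N * h \<le> t0"
    and k: "k \<le> N" and s: "s \<in> {0..1}"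
  shows "infdist x0 (- D) * (1 - h * L) ^ Suc k
    \<le> infdist (backward_euler u t0 x0 h k - (s * h) *\<^sub>R u (t0 - real k * h, backward_euler u t0 x0 h k)) (- D)"
proof -
  have step: "(1 - h * L) * infdist y (- D) \<le> infdist (y - (s * h) *\<^sub>R u (t, y)) (- D)"
    if t: "t \<in> {0..t0}" and s: "s \<in> {0..1}" for t y s
  proof (cases "y \<in> D")
    case True
    have "(1 - h * L) * infdist y (- D) \<le> (1 - (s * h) * L) * infdist y (- D)"
      using s h L mult_left_le_one_le[of "h * L" s]
      by (intro mult_right_mono) (auto simp: infdist_nonneg mult.assoc)
    also have "\<dots> \<le> infdist (y - (s * h) *\<^sub>R u (t, y)) (- D)"
      using s h bound[OF t True] by (intro infdist_step_ge) auto
    finally show ?thesis .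
  qed (simp add: infdist_nonneg)
  have time: "t0 - real j * h \<in> {0..t0}" if "j \<le> N" for j
    using that h N mult_right_mono[of "real j" "real N" h] by auto
  show ?thesis
    using k s
  proof (induction k arbitrary: s)
    case 0
    then show ?case using step[OF time[of 0], of s x0] by (simp add: mult.commute)
  next
    case (Suc k)
    have "infdist x0 (- D) * (1 - h * L) ^ Suc k \<le> infdist (backward_euler u t0 x0 h (Suc k)) (- D)"
      using Suc.IH[of 1] Suc.prems by simp
    from mult_left_mono[OF this, of "1 - h * L"] h
    have "infdist x0 (- D) * (1 - h * L) ^ Suc (Suc k)
        \<le> (1 - h * L) * infdist (backward_euler u t0 x0 h (Suc k)) (- D)"
      by (simp only: power_Suc mult_ac)
    also note step[OF time[OF Suc.prems(1)] Suc.prems(2)]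
    finally show ?case .
  qed
qed

locale no_slip_flow =
  fixes D :: "'a::euclidean_space set"
    and u :: "real \<times> 'a \<Rightarrow> 'a"
    and Du :: "real \<times> 'a \<Rightarrow> (real \<times> 'a) \<Rightarrow>\<^sub>L 'a"
  assumes open_D: "open D" and bounded_D: "bounded D"
    and velocity_C1: "C1_on u Du ({0..} \<times> closure D)"
    and no_slip: "\<And>t x. 0 \<le> t \<Longrightarrow> x \<in> frontier D \<Longrightarrow> u (t, x) = 0"
begin

lemma continuous_on_velocity: "continuous_on ({0..} \<times> closure D) u"
  by (rule has_derivative_continuous_on) (use velocity_C1 in \<open>auto simp: C1_on_def\<close>)

lemma compl_D_nonempty: "- D \<noteq> {}"
proof
  assume "- D = {}"
  then have "D = UNIV" by auto
  then show False using bounded_D not_bounded_UNIV by metis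
qed

lemma velocity_le_infdist:
  assumes "0 \<le> t0"
  obtains L where "0 < L" "\<And>t x. t \<in> {0..t0} \<Longrightarrow> x \<in> D \<Longrightarrow> norm (u (t, x)) \<le> L * infdist x (- D)"
proof -
  let ?S = "{0..} \<times> closure D"
  have deriv: "\<And>z. z \<in> ?S \<Longrightarrow> (u has_derivative blinfun_apply (Du z)) (at z within ?S)"
    and cont: "continuous_on ?S Du"
    using velocity_C1 by (auto simp: C1_on_def)
  have "compact ({0..t0} \<times> closure D)"
    using bounded_D by (intro compact_Times) (auto simp: compact_eq_bounded_closed)
  moreover have "continuous_on ({0..t0} \<times> closure D) Du"
    by (rule continuous_on_subset[OF cont]) auto
  ultimately obtain L where L: "0 < L" "\<And>z. z \<in> {0..t0} \<times> closure D \<Longrightarrow> norm (Du z) \<le> L"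
    by (metis compact_continuous_image compact_imp_bounded bounded_pos imageI)
  have "norm (u (t, x)) \<le> L * infdist x (- D)" if t: "t \<in> {0..t0}" and x: "x \<in> D" for t x
  proof (rule norm_le_infdist_compl[where g = "\<lambda>y. u (t, y)" and g' = "\<lambda>y v. Du (t, y) (0, v)"])
    show "open D" "D \<noteq> UNIV" "x \<in> D" using open_D compl_D_nonempty x by auto
    show "u (t, y) = 0" if "y \<in> frontier D" for y using no_slip that t by simp
    fix y assume y: "y \<in> closure D"
    have "((\<lambda>y. (t, y)) has_derivative (\<lambda>v. (0, v))) (at y within closure D)"
      by (intro derivative_eq_intros) auto
    moreover have "(u has_derivative Du (t, y)) (at (t, y) within (\<lambda>y. (t, y)) ` closure D)"
      using t y by (intro has_derivative_subset[OF deriv]) auto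
    ultimately show "((\<lambda>y. u (t, y)) has_derivative (\<lambda>v. Du (t, y) (0, v))) (at y within closure D)"
      by (rule has_derivative_in_compose)
    show "onorm (\<lambda>v. Du (t, y) (0, v)) \<le> L"
    proof (rule onorm_le)
      fix v
      have "norm (Du (t, y) (0, v)) \<le> norm (Du (t, y)) * norm v"
        using norm_blinfun[of "Du (t, y)" "(0, v)"] by (simp add: norm_Pair)
      also have "\<dots> \<le> L * norm v" using L(2) t y by (intro mult_right_mono) auto
      finally show "norm (Du (t, y) (0, v)) \<le> L * norm v" .
    qed
  qed
  with L(1) show ?thesis using that by blast
qed

lemma backward_euler_in_compact:
  assumes t0: "0 \<le> t0" and x0: "x0 \<in> D"
  obtains K \<eta> where "compact K" "K \<subseteq> D" "0 < \<eta>" "backward_euler_within u t0 x0 \<eta> K"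
proof -
  obtain L where L: "0 < L" and bound: "\<And>t x. t \<in> {0..t0} \<Longrightarrow> x \<in> D \<Longrightarrow> norm (u (t, x)) \<le> L * infdist x (- D)"
    using velocity_le_infdist[OF t0] by blast
  define \<eta> where "\<eta> = 1 / (2 * L)"
  \<comment> \<open>each step keeps a factor \<open>1 - h L \<ge> exp (- 2 h L)\<close> of the distance to the boundary\<close>
  define \<rho> where "\<rho> = infdist x0 (- D) * exp (- 2 * L * (t0 + \<eta>))"
  define K where "K = {y. \<rho> \<le> infdist y (- D)}"
  have "0 < infdist x0 (- D)"
    using x0 open_D compl_D_nonempty by (intro infdist_pos_not_in_closed) auto
  then have \<rho>: "0 < \<rho>" by (simp add: \<rho>_def)
  have KD: "K \<subseteq> D" using \<rho> by (auto simp: K_def) (metis ComplI infdist_zero not_le)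
  have "closed K" unfolding K_def by (intro closed_Collect_le continuous_intros)
  then have "compact K" using bounded_subset[OF bounded_D KD] by (simp add: compact_eq_bounded_closed)
  moreover have "0 < \<eta>" using L by (simp add: \<eta>_def)
  moreover have "backward_euler u t0 x0 h k - (s * h) *\<^sub>R u (t0 - real k * h, backward_euler u t0 x0 h k) \<in> K"
    if h: "0 < h" "h \<le> \<eta>" and N: "real N * h \<le> t0" and k: "k \<le> N" and s: "s \<in> {0..1}" for h N k s
  proof -
    have hL: "h * L \<le> 1 / 2" using h L by (simp add: \<eta>_def field_simps)
    have "real k * h \<le> real N * h" using k h by (intro mult_right_mono) auto
    moreover have "real (Suc k) * h = real k * h + h" by (simp add: algebra_simps)
    ultimately have "real (Suc k) * h \<le> t0 + \<eta>" using N h by linarith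
    then have "- 2 * L * (t0 + \<eta>) \<le> real (Suc k) * (- 2 * (h * L))"
      using L mult_left_mono[of "real (Suc k) * h" "t0 + \<eta>" "2 * L"] by (simp add: algebra_simps)
    then have "exp (- 2 * L * (t0 + \<eta>)) \<le> exp (real (Suc k) * (- 2 * (h * L)))"
      by (rule exp_mono)
    also have "\<dots> \<le> (1 - h * L) ^ Suc k"
      using h L hL by (intro exp_le_one_minus_power) auto
    finally have "\<rho> \<le> infdist x0 (- D) * (1 - h * L) ^ Suc k"
      unfolding \<rho>_def by (intro mult_left_mono) (auto simp: infdist_nonneg)
    also have "\<dots> \<le> infdist (backward_euler u t0 x0 h k - (s * h) *\<^sub>R u (t0 - real k * h, backward_euler u t0 x0 h k)) (- D)"
      using L h hL N k s by (intro infdist_backward_euler_ge[OF bound]) auto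
    finally show ?thesis by (simp add: K_def)
  qed
  ultimately show ?thesis using that KD by (simp add: backward_euler_within_def)
qed

end

section \<open>Transport with damping below a level\<close>

text \<open>\<open>F' z (1, w)\<close> is the derivative of \<open>F\<close> along the space-time direction \<open>(1, w)\<close>;
  for \<open>w = u z\<close> it is the material derivative of \<open>F\<close>.\<close>
locale damped_transport = no_slip_flow D u Du
  for D :: "'a::euclidean_space set" and u Du +
  fixes F :: "real \<times> 'a \<Rightarrow> real"
    and F' :: "real \<times> 'a \<Rightarrow> real \<times> 'a \<Rightarrow> real"
    and C a :: real
  assumes F_deriv: "\<And>z. z \<in> {0..} \<times> closure D \<Longrightarrow> (F has_derivative F' z) (at z within {0..} \<times> closure D)"
    and F'_cont: "continuous_on (({0..} \<times> closure D) \<times> UNIV) (\<lambda>(z, w). F' z (1, w))"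
    and C_nonneg: "0 \<le> C"
    and rate: "\<And>t x. 0 \<le> t \<Longrightarrow> x \<in> D \<Longrightarrow> - C * max 0 (F (t, x) - a) \<le> F' (t, x) (1, u (t, x))"
begin

lemma continuous_on_F: "continuous_on ({0..} \<times> closure D) F"
  by (rule has_derivative_continuous_on[OF F_deriv])

lemma uniform_backward_step:
  assumes W: "compact W" "W \<subseteq> {0..} \<times> closure D" and U: "0 \<le> U" and \<epsilon>: "0 < \<epsilon>"
  obtains \<delta> where "0 < \<delta>"
    "\<And>z w h. 0 \<le> h \<Longrightarrow> h * (1 + U) < \<delta> \<Longrightarrow> norm w \<le> U \<Longrightarrow>
       (\<And>s. s \<in> {0..1} \<Longrightarrow> z - (s * h) *\<^sub>R (1, w) \<in> W) \<Longrightarrow>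
       F (z - h *\<^sub>R (1, w)) \<le> F z - h * F' z (1, w) + h * \<epsilon>"
proof -
  have "compact (W \<times> cball (0::'a) U)" using W by (intro compact_Times compact_cball)
  moreover have "continuous_on (W \<times> cball (0::'a) U) (\<lambda>(z, w). F' z (1, w))"
    by (rule continuous_on_subset[OF F'_cont]) (use W in auto)
  ultimately obtain \<delta> where \<delta>: "0 < \<delta>"
    and close: "\<And>p p'. p \<in> W \<times> cball (0::'a) U \<Longrightarrow> p' \<in> W \<times> cball (0::'a) U \<Longrightarrow> dist p' p < \<delta> \<Longrightarrow>
        dist ((\<lambda>(z, w). F' z (1, w)) p') ((\<lambda>(z, w). F' z (1, w)) p) < \<epsilon>"
    using \<epsilon> compact_uniformly_continuous unfolding uniformly_continuous_on_def by metis
  have "F (z - h *\<^sub>R (1, w)) \<le> F z - h * F' z (1, w) + h * \<epsilon>"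
    if h: "0 \<le> h" "h * (1 + U) < \<delta>" and w: "norm w \<le> U"
      and seg: "\<And>s. s \<in> {0..1} \<Longrightarrow> z - (s * h) *\<^sub>R (1, w) \<in> W" for z w h
  proof -
    have zW: "z \<in> W" using seg[of 0] by (simp del: scaleR_Pair)
    have "F (z - h *\<^sub>R (1, w)) \<le> F z - h * (F' z (1, w) - \<epsilon>)"
    proof (rule has_derivative_backward_segment_le[OF F_deriv h(1)])
      fix s :: real assume s: "s \<in> {0..1}"
      show "z - (s * h) *\<^sub>R (1, w) \<in> {0..} \<times> closure D" using seg[OF s] W by auto
      have "dist (z - (s * h) *\<^sub>R (1, w), w) (z, w) = s * h * norm ((1::real), w)"
        using s h by (simp add: dist_Pair_Pair dist_norm del: scaleR_Pair)
      also have "\<dots> \<le> h * norm ((1::real), w)"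
        using s h mult_left_le_one_le[of "h * norm ((1::real), w)" s] by (simp add: mult.assoc)
      also have "\<dots> \<le> h * (1 + U)"
        using h w norm_Pair_le[of "1::real" w] by (intro mult_left_mono) auto
      finally show "F' z (1, w) - \<epsilon> \<le> F' (z - (s * h) *\<^sub>R (1, w)) (1, w)"
        using close[of "(z, w)" "(z - (s * h) *\<^sub>R (1, w), w)"] seg[OF s] zW w h
        by (auto simp: dist_real_def)
    qed
    then show ?thesis by (simp add: right_diff_distrib)
  qed
  with \<delta> that show ?thesis by blast
qed

definition excess :: "real \<times> 'a \<Rightarrow> real" where
  "excess z = max 0 (F z - a)"

lemma excess_backward_step:
  assumes t: "0 \<le> t" and x: "x \<in> D" and h: "0 \<le> h" and \<epsilon>: "0 \<le> \<epsilon>"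
    and step: "F ((t, x) - h *\<^sub>R (1, u (t, x))) \<le> F (t, x) - h * F' (t, x) (1, u (t, x)) + h * \<epsilon>"
  shows "excess ((t, x) - h *\<^sub>R (1, u (t, x))) \<le> (1 + h * C) * excess (t, x) + h * \<epsilon>"
proof -
  have "- (C * excess (t, x)) \<le> F' (t, x) (1, u (t, x))"
    using rate[OF t x] by (simp add: excess_def)
  from mult_left_mono[OF this h] step
  have "F ((t, x) - h *\<^sub>R (1, u (t, x))) - a \<le> excess (t, x) + h * (C * excess (t, x)) + h * \<epsilon>"
    by (simp add: excess_def)
  moreover have "0 \<le> excess (t, x)" "0 \<le> h * (C * excess (t, x))" "0 \<le> h * \<epsilon>"
    using h C_nonneg \<epsilon> by (simp_all add: excess_def)
  ultimately show ?thesis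
    unfolding excess_def[of "_ - _"] max.bounded_iff by (simp add: algebra_simps)
qed

lemma backward_euler_excess_recursion:
  assumes t0: "0 < t0" and \<epsilon>: "0 < \<epsilon>" and K: "compact K" "K \<subseteq> D" and \<eta>: "0 < \<eta>"
    and within: "backward_euler_within u t0 x0 \<eta> K"
  obtains N h where "0 < h" "real N * h = t0" "backward_euler u t0 x0 h N \<in> K"
    "\<And>k. k < N \<Longrightarrow> excess (t0 - real (Suc k) * h, backward_euler u t0 x0 h (Suc k))
       \<le> (1 + h * C) * excess (t0 - real k * h, backward_euler u t0 x0 h k) + h * \<epsilon>"
proof -
  define W where "W = {0..t0} \<times> K"
  have W: "compact W" "W \<subseteq> {0..} \<times> closure D"
    using K closure_subset by (auto simp: W_def intro!: compact_Times)
  obtain U where U: "0 \<le> U" "\<And>z. z \<in> W \<Longrightarrow> norm (u z) \<le> U"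
    using compact_continuous_image[OF continuous_on_subset[OF continuous_on_velocity W(2)] W(1)]
    by (metis compact_imp_bounded bounded_pos imageI less_imp_le)
  obtain \<delta> where \<delta>: "0 < \<delta>"
    and step: "\<And>z w h. 0 \<le> h \<Longrightarrow> h * (1 + U) < \<delta> \<Longrightarrow> norm w \<le> U \<Longrightarrow>
       (\<And>s. s \<in> {0..1} \<Longrightarrow> z - (s * h) *\<^sub>R (1, w) \<in> W) \<Longrightarrow>
       F (z - h *\<^sub>R (1, w)) \<le> F z - h * F' z (1, w) + h * \<epsilon>"
    using uniform_backward_step[OF W U(1) \<epsilon>] by blast
  have "0 < min \<eta> (\<delta> / (2 * (1 + U)))" using \<eta> \<delta> U by simp
  then obtain N h where h: "0 < h" "h < min \<eta> (\<delta> / (2 * (1 + U)))" "real N * h = t0"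
    by (rule uniform_subdivision[OF t0])
  then have h\<eta>: "h \<le> \<eta>" and "h * (1 + U) \<le> \<delta> / 2"
    using U by (auto simp: field_simps)
  then have h\<delta>: "h * (1 + U) < \<delta>" using \<delta> by linarith
  define x where "x = backward_euler u t0 x0 h"
  have polygon: "x k - (s * h) *\<^sub>R u (t0 - real k * h, x k) \<in> K" if "k \<le> N" "s \<in> {0..1}" for k s
    unfolding x_def using h h\<eta> that by (intro backward_euler_withinD[OF within]) auto
  have "excess (t0 - real (Suc k) * h, x (Suc k)) \<le> (1 + h * C) * excess (t0 - real k * h, x k) + h * \<epsilon>"
    if k: "k < N" for k
  proof -
    define z where "z = (t0 - real k * h, x k)"
    have seg: "z - (s * h) *\<^sub>R (1, u z) \<in> W" if "s \<in> {0..1}" for s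
      using backward_time_mem[OF k h(3) _ that] polygon[OF _ that, of k] k h(1)
      by (simp add: W_def z_def algebra_simps)
    have zW: "z \<in> W" using seg[of 0] by (simp del: scaleR_Pair)
    have next_point: "z - h *\<^sub>R (1, u z) = (t0 - real (Suc k) * h, x (Suc k))"
      by (simp add: z_def x_def algebra_simps)
    have "excess (z - h *\<^sub>R (1, u z)) \<le> (1 + h * C) * excess z + h * \<epsilon>"
      using zW K(2) h \<epsilon> step[OF _ h\<delta> U(2)[OF zW] seg]
      unfolding z_def by (intro excess_backward_step) (auto simp: W_def)
    then show ?thesis by (simp only: next_point) (simp only: z_def)
  qed
  moreover have "x N \<in> K" using polygon[of N 0] by simp
  ultimately show ?thesis using that h unfolding x_def by blast
qed

text \<open>Follow an approximate characteristic backwards from a point where \<open>F \<le> a\<close>: the excess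
  stays below \<open>t0 \<epsilon> exp (C t0)\<close> for every \<open>\<epsilon>\<close>, yet at time 0 it is bounded below on
  the compact set containing all the polygons.\<close>
theorem above_level:
  assumes init: "\<And>x. x \<in> D \<Longrightarrow> a < F (0, x)" and t0: "0 \<le> t0" and x0: "x0 \<in> D"
  shows "a < F (t0, x0)"
proof (rule ccontr)
  assume "\<not> a < F (t0, x0)"
  then have F0: "F (t0, x0) \<le> a" by simp
  then have t0_pos: "0 < t0" using init[OF x0] t0 by (cases "t0 = 0") auto
  obtain K \<eta> where K: "compact K" "K \<subseteq> D" and \<eta>: "0 < \<eta>" and within: "backward_euler_within u t0 x0 \<eta> K"
    using backward_euler_in_compact[OF t0 x0] by blast
  have "x0 \<in> K" using backward_euler_withinD[OF within \<eta> order_refl, of 0 0 0] t0 by simp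
  moreover have "continuous_on K (\<lambda>y. F (0, y))"
    using K(2) closure_subset
    by (intro continuous_on_compose2[OF continuous_on_F]) (auto intro!: continuous_intros)
  ultimately obtain xm where xm: "xm \<in> K" "\<And>y. y \<in> K \<Longrightarrow> F (0, xm) \<le> F (0, y)"
    using continuous_attains_inf[OF K(1)] by blast
  define c where "c = F (0, xm) - a"
  have c: "0 < c" using init xm(1) K(2) by (auto simp: c_def)
  define \<epsilon> where "\<epsilon> = c / (t0 + 1) / exp (C * t0)"
  have \<epsilon>: "0 < \<epsilon>" using c t0 by (simp add: \<epsilon>_def)
  obtain N h where h: "0 < h" "real N * h = t0" and xN: "backward_euler u t0 x0 h N \<in> K"
    and rec: "\<And>k. k < N \<Longrightarrow> excess (t0 - real (Suc k) * h, backward_euler u t0 x0 h (Suc k))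
       \<le> (1 + h * C) * excess (t0 - real k * h, backward_euler u t0 x0 h k) + h * \<epsilon>"
    using backward_euler_excess_recursion[OF t0_pos \<epsilon> K \<eta> within] by blast
  have "excess (t0 - real N * h, backward_euler u t0 x0 h N) \<le> real N * (h * \<epsilon>) * exp (real N * (h * C))"
    using h \<epsilon> C_nonneg F0 rec by (intro discrete_gronwall) (auto simp: excess_def)
  also have "\<dots> = t0 * \<epsilon> * exp (C * t0)"
    unfolding h(2)[symmetric] by (simp add: algebra_simps)
  also have "\<dots> = t0 / (t0 + 1) * c"
    by (simp add: \<epsilon>_def)
  also have "\<dots> < c" using c t0 by (simp add: field_simps)
  finally have "F (0, backward_euler u t0 x0 h N) - a < c" using h by (simp add: excess_def)
  with xm(2)[OF xN] show False by (simp add: c_def)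
qed

end

section \<open>The Oldroyd-B system\<close>

lemma oldroyd_B_conformation_det_transport:
  fixes D :: "(real^'n) set"
    and u :: "'n stp \<Rightarrow> real^'n" and Du :: "'n stp \<Rightarrow> ('n stp \<Rightarrow>\<^sub>L (real^'n))"
    and \<tau> :: "'n stp \<Rightarrow> real^'n^'n" and D\<tau> :: "'n stp \<Rightarrow> ('n stp \<Rightarrow>\<^sub>L (real^'n^'n))"
  assumes dom: "bounded_domain D" and We: "We > 0" and eps: "0 < \<epsilon>"
    and reg_u: "C1_on u Du ({0..} \<times> closure D)"
    and reg_tau: "C1_on \<tau> D\<tau> ({0..} \<times> closure D)"
    and incompressible: "\<And>t x. t \<ge> 0 \<Longrightarrow> x \<in> D \<Longrightarrow> trace (grad_vel (Du (t, x))) = 0"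
    and constitutive: "\<And>t x. t \<ge> 0 \<Longrightarrow> x \<in> D \<Longrightarrow>
        blinfun_apply (D\<tau> (t, x)) tdir + conv (u (t, x)) (D\<tau> (t, x))
        = grad_vel (Du (t, x)) ** \<tau> (t, x) + \<tau> (t, x) ** transpose (grad_vel (Du (t, x)))
          - (1 / We) *\<^sub>R \<tau> (t, x)
          + (\<epsilon> / We) *\<^sub>R (grad_vel (Du (t, x)) + transpose (grad_vel (Du (t, x))))"
    and noslip: "\<And>t x. t \<ge> 0 \<Longrightarrow> x \<in> frontier D \<Longrightarrow> u (t, x) = 0"
    and spd_all: "\<And>t x. t \<ge> 0 \<Longrightarrow> x \<in> D \<Longrightarrow> spd (conformation We \<epsilon> (\<tau> (t, x)))"
  shows "damped_transport D u Du (\<lambda>z. det (conformation We \<epsilon> (\<tau> z)))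
    (\<lambda>z v. det_differential (conformation We \<epsilon> (\<tau> z)) ((We / \<epsilon>) *\<^sub>R D\<tau> z v))
    (real CARD('n) / We) 1"
proof unfold_locales
  let ?S = "{0::real..} \<times> closure D"
  have deriv: "\<And>z. z \<in> ?S \<Longrightarrow> (\<tau> has_derivative D\<tau> z) (at z within ?S)"
    and cont: "continuous_on ?S D\<tau>"
    using reg_tau by (auto simp: C1_on_def)
  show "open D" "bounded D" using dom by (auto simp: bounded_domain_def)
  show "C1_on u Du ?S" by (rule reg_u)
  show "\<And>t x. 0 \<le> t \<Longrightarrow> x \<in> frontier D \<Longrightarrow> u (t, x) = 0" by (rule noslip)
  show "0 \<le> real CARD('n) / We" using We by simp
  show "((\<lambda>z. det (conformation We \<epsilon> (\<tau> z))) has_derivative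
      (\<lambda>v. det_differential (conformation We \<epsilon> (\<tau> z)) ((We / \<epsilon>) *\<^sub>R D\<tau> z v))) (at z within ?S)"
    if "z \<in> ?S" for z
    unfolding conformation_def
    by (rule has_derivative_compose[OF _ has_derivative_det])
       (auto intro!: derivative_eq_intros deriv[OF that])
  have "continuous_on (?S \<times> UNIV) (\<lambda>p. \<tau> (fst p))"
    by (rule continuous_on_compose2[OF has_derivative_continuous_on[OF deriv]]) (auto intro: continuous_intros)
  moreover have "continuous_on (?S \<times> UNIV) (\<lambda>p. D\<tau> (fst p))"
    by (rule continuous_on_compose2[OF cont]) (auto intro: continuous_intros)
  ultimately show "continuous_on (?S \<times> UNIV) (\<lambda>(z, w).
      det_differential (conformation We \<epsilon> (\<tau> z)) ((We / \<epsilon>) *\<^sub>R D\<tau> z (1, w)))"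
    unfolding conformation_def case_prod_beta
    by (intro continuous_on_det_differential continuous_intros blinfun.continuous_on) auto
  fix t :: real and x assume tx: "0 \<le> t" "x \<in> D"
  define G where "G = grad_vel (Du (t, x))"
  define A where "A = conformation We \<epsilon> (\<tau> (t, x))"
  have "(We / \<epsilon>) *\<^sub>R D\<tau> (t, x) (1, u (t, x))
      = G ** A + A ** transpose G - (1 / We) *\<^sub>R A + (1 / We) *\<^sub>R mat 1"
    using constitutive[OF tx] tdir_add_conv[of "D\<tau> (t, x)"] conformation_evolution[OF We eps]
    by (simp add: G_def A_def)
  then show "- (real CARD('n) / We) * max 0 (det A - 1)
      \<le> det_differential A ((We / \<epsilon>) *\<^sub>R D\<tau> (t, x) (1, u (t, x)))"
    using det_differential_conformation_rate[OF _ _ We] spd_all[OF tx] incompressible[OF tx]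
    by (simp add: A_def G_def)
qed

theorem lemma1:
  fixes D :: "(real^'n) set"
    and Re We \<epsilon> :: real
    and u :: "'n stp \<Rightarrow> real^'n"
    and Du :: "'n stp \<Rightarrow> ('n stp \<Rightarrow>\<^sub>L (real^'n))"
    and D2u :: "'n stp \<Rightarrow> ('n stp \<Rightarrow>\<^sub>L ('n stp \<Rightarrow>\<^sub>L (real^'n)))"
    and p :: "'n stp \<Rightarrow> real"
    and Dp :: "'n stp \<Rightarrow> ('n stp \<Rightarrow>\<^sub>L real)"
    and \<tau> :: "'n stp \<Rightarrow> real^'n^'n"
    and D\<tau> :: "'n stp \<Rightarrow> ('n stp \<Rightarrow>\<^sub>L (real^'n^'n))"
  assumes dom: "bounded_domain D"
    and Re: "Re > 0" and We: "We > 0" and eps: "0 < \<epsilon>" "\<epsilon> < 1"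
    and reg_u: "C2_on u Du D2u ({0..} \<times> closure D)"
    and reg_p: "C1_on p Dp ({0..} \<times> closure D)"
    and reg_tau: "C1_on \<tau> D\<tau> ({0..} \<times> closure D)"
    and momentum: "\<And>t x. t \<ge> 0 \<Longrightarrow> x \<in> D \<Longrightarrow>
        Re *\<^sub>R (blinfun_apply (Du (t, x)) tdir + conv (u (t, x)) (Du (t, x)))
        = (1 - \<epsilon>) *\<^sub>R lap_vel (D2u (t, x)) - grad_scal (Dp (t, x)) + div_mat (D\<tau> (t, x))"
    and incompressible: "\<And>t x. t \<ge> 0 \<Longrightarrow> x \<in> D \<Longrightarrow> trace (grad_vel (Du (t, x))) = 0"
    and constitutive: "\<And>t x. t \<ge> 0 \<Longrightarrow> x \<in> D \<Longrightarrow>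
        blinfun_apply (D\<tau> (t, x)) tdir + conv (u (t, x)) (D\<tau> (t, x))
        = grad_vel (Du (t, x)) ** \<tau> (t, x) + \<tau> (t, x) ** transpose (grad_vel (Du (t, x)))
          - (1 / We) *\<^sub>R \<tau> (t, x)
          + (\<epsilon> / We) *\<^sub>R (grad_vel (Du (t, x)) + transpose (grad_vel (Du (t, x))))"
    and noslip: "\<And>t x. t \<ge> 0 \<Longrightarrow> x \<in> frontier D \<Longrightarrow> u (t, x) = 0"
    and spd_all: "\<And>t x. t \<ge> 0 \<Longrightarrow> x \<in> D \<Longrightarrow> spd (conformation We \<epsilon> (\<tau> (t, x)))"
    and spd0: "\<And>x. x \<in> D \<Longrightarrow> spd (conformation We \<epsilon> (\<tau> (0, x)))"
    and det0: "\<And>x. x \<in> D \<Longrightarrow> det (conformation We \<epsilon> (\<tau> (0, x))) > 1"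
  shows "\<forall>t\<ge>0. \<forall>x\<in>D. det (conformation We \<epsilon> (\<tau> (t, x))) > 1 \<and> trace (\<tau> (t, x)) > 0"
proof (intro allI impI ballI conjI)
  fix t :: real and x assume tx: "0 \<le> t" "x \<in> D"
  have "C1_on u Du ({0..} \<times> closure D)" using reg_u by (simp add: C2_on_def)
  from oldroyd_B_conformation_det_transport[OF dom We eps(1) this reg_tau incompressible
      constitutive noslip spd_all]
  interpret damped_transport D u Du "\<lambda>z. det (conformation We \<epsilon> (\<tau> z))"
    "\<lambda>z v. det_differential (conformation We \<epsilon> (\<tau> z)) ((We / \<epsilon>) *\<^sub>R D\<tau> z v)"
    "real CARD('n) / We" 1 .
  show det: "1 < det (conformation We \<epsilon> (\<tau> (t, x)))"
    using above_level[OF det0 tx] .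
  have "real CARD('n) < We / \<epsilon> * trace (\<tau> (t, x)) + real CARD('n)"
    using spd_trace_gt_card[OF spd_all[OF tx] det] by (simp add: trace_conformation)
  then show "0 < trace (\<tau> (t, x))" using We eps by (simp add: zero_less_mult_iff zero_less_divide_iff)
qed

end
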